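(* Let $N>2$, $1<p<N$, $a>0$, and assume (H1)–(H4). Suppose $v_a$ solves $$(|v'(t)|^{p-2}v'(t))'+h(t)f(v(t))=0,\qquad v(0)=0,\ v'(0)=a$$ on $[0,z]$ where $0<z<T$. If $v_a(z)=0$, then $v_a'(z)\neq 0$.
   Context: Standing hypotheses. $f:\mathbb{R}\setminus\{0\}\to\mathbb{R}$ is odd and locally Lipschitz, and: (H1) there is a locally Lipschitz $g_1:\mathbb{R}\to\mathbb{R}$ and $l>p-1$ with $f(u)=|u|^{l-1}u+g_1(u)$ for all large $|u|$, and $\lim_{u\to\infty}|g_1(u)|/|u|^l=0$; (H2) there is a locally Lipschitz $g_2:\mathbb{R}\to\mathbb{R}$ with $g_2(0)=0$ and $0<m<1$ such that $f(u)=-\frac{1}{|u|^{m-1}u}+g_2(u)$ for all small $|u|\neq 0$; (H3) $f$ has a unique positive zero $\beta$, with $f<0$ on $(0,\beta)$ and $f>0$ on $(\beta,\infty)$; (H4) $K>0$ and $K'$ are continuous on $[R,\infty)$ (for a fixed $R>0$), $\frac{rK'(r)}{K(r)}>-\frac{(N-1)p}{p-1}$ on $[R,\infty)$, and there are constants $K_0,K_1>0$ with $\frac{K_0}{r^{\alpha}}\le K(r)\le \frac{K_1}{r^{\alpha_1}}$ on $[R,\infty)$, where $N+\frac{m(N-p)}{p-1}<\alpha_1\le\alpha<2(N-1)$. Notation: $T=R^{\frac{p-N}{p-1}}$ and, for $0<t\le T$, $h(t)=\left(\frac{N-p}{p-1}\right)^{-p}t^{\frac{p(N-1)}{p-N}}K\!\left(t^{\frac{p-1}{p-N}}\right)>0$.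 A solution of the initial value problem on an interval $[0,d]$ means $v\in C^1[0,d]$ such that $t\mapsto h(t)f(v(t))$ is integrable on $(0,t)$ for each $t\le d$ and $|v'(t)|^{p-2}v'(t)=a^{p-1}-\int_0^t h(s)f(v(s))\,ds$, $v(0)=0$. *)

theory Defs
  imports "HOL-Analysis.Analysis"
begin

definition loc_lipschitz_on :: "real set \<Rightarrow> (real \<Rightarrow> real) \<Rightarrow> bool" where
  "loc_lipschitz_on S g \<longleftrightarrow>
     (\<forall>x\<in>S. \<exists>e>0. \<exists>L. L-lipschitz_on (cball x e \<inter> S) g)"

definition Tconst :: "nat \<Rightarrow> real \<Rightarrow> real \<Rightarrow> real" where
  "Tconst N p R = R powr ((p - real N) / (p - 1))"

definition hfun :: "nat \<Rightarrow> real \<Rightarrow> (real \<Rightarrow> real) \<Rightarrow> real \<Rightarrow> real" where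
  "hfun N p K t =
     ((real N - p) / (p - 1)) powr (- p) * t powr (p * (real N - 1) / (p - real N))
       * K (t powr ((p - 1) / (p - real N)))"

definition ivp_solution ::
  "nat \<Rightarrow> real \<Rightarrow> (real \<Rightarrow> real) \<Rightarrow> (real \<Rightarrow> real) \<Rightarrow> real \<Rightarrow> real
     \<Rightarrow> (real \<Rightarrow> real) \<Rightarrow> (real \<Rightarrow> real) \<Rightarrow> bool" where
  "ivp_solution N p K f a d v v' \<longleftrightarrow>
     (\<forall>t\<in>{0..d}. (v has_real_derivative v' t) (at t within {0..d})) \<and>
     continuous_on {0..d} v' \<and>
     v 0 = 0 \<and>
     (\<forall>t\<in>{0..d}.
        set_integrable lborel {0<..<t} (\<lambda>s. hfun N p K s * f (v s)) \<and>
        \<bar>v' t\<bar> powr (p - 2) * v' t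
          = a powr (p - 1) - (LINT s:{0<..<t}|lborel. hfun N p K s * f (v s)))"

end

theory Submission
  imports Defs
begin

text \<open>
  Suppose \<open>v(z) = v'(z) = 0\<close> and let \<open>s\<close> be the first point where \<open>v\<close> and \<open>v'\<close> vanish
  together. With \<open>F\<close> the (even) primitive of \<open>f\<close>, the energy
  \<open>E(t) = (p-1)/p |v'(t)|^p + h(t) F(v(t))\<close> satisfies \<open>E' = h' F(v)\<close> away from the zeros of
  \<open>v\<close>. By (H4) \<open>h\<close> is decreasing and by (H3) \<open>F < 0\<close> on \<open>[-\<beta>, \<beta>] - {0}\<close>, so after the
  last time \<open>t\<^sub>0 < s\<close> at which \<open>|v| \<ge> \<beta>\<close> and \<open>F(v) \<ge> 0\<close> (or after \<open>t\<^sub>0 = 0\<close>) the energy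
  increases strictly. As \<open>E(t\<^sub>0) \<ge> 0 = E(s)\<close>, this is impossible. The zeros of \<open>v\<close> before \<open>s\<close>
  are simple, hence finitely many on every \<open>[t\<^sub>0, d]\<close> with \<open>d < s\<close>; and (H2), which makes
  \<open>F(u) = O(|u|^(1-m))\<close>, together with the decay of \<open>K\<close> in (H4) keeps \<open>E\<close> continuous at
  \<open>t = 0\<close>, where \<open>h\<close> itself may blow up.
\<close>

section \<open>Calculus on the real line\<close>

lemma isCont_if_loc_lipschitz_on:
  assumes "loc_lipschitz_on S g" "open S" "x \<in> S"
  shows "isCont g x"
proof -
  obtain e L where e: "e > 0" and L: "L-lipschitz_on (cball x e \<inter> S) g"
    using assms(1,3) unfolding loc_lipschitz_on_def by blast
  have "x \<in> interior (cball x e \<inter> S)"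
  proof -
    have "ball x e \<inter> S \<subseteq> cball x e \<inter> S" "open (ball x e \<inter> S)" "x \<in> ball x e \<inter> S"
      using assms(2,3) e by auto
    then show ?thesis by (meson interior_maximal subsetD)
  qed
  then show ?thesis
    using lipschitz_on_continuous_on[OF L] by (rule continuous_on_interior[rotated])
qed

lemma has_real_derivative_abs_powr:
  fixes q :: real
  assumes q: "q > 1"
  shows "((\<lambda>x. \<bar>x\<bar> powr q) has_real_derivative q * \<bar>y\<bar> powr (q - 1) * sgn y) (at y)"
proof (cases "y = 0")
  case True
  have "isCont (\<lambda>x. \<bar>x\<bar> powr (q - 1)) 0" using q by (intro continuous_intros) auto
  then have "((\<lambda>x. \<bar>x\<bar> powr (q - 1)) \<longlongrightarrow> 0) (at 0)" by (simp add: isCont_def)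
  moreover have "\<forall>\<^sub>F x in at 0. \<bar>x\<bar> powr (q - 1) = \<bar>(\<bar>x\<bar> powr q - \<bar>0\<bar> powr q) / (x - 0)\<bar>"
    by (simp add: eventually_at_filter powr_diff abs_divide)
  ultimately have "((\<lambda>x. \<bar>(\<bar>x\<bar> powr q - \<bar>0\<bar> powr q) / (x - 0)\<bar>) \<longlongrightarrow> 0) (at 0)"
    by (rule Lim_transform_eventually)
  then have "((\<lambda>x. (\<bar>x\<bar> powr q - \<bar>0\<bar> powr q) / (x - 0)) \<longlongrightarrow> 0) (at 0)"
    by (simp only: tendsto_rabs_zero_iff)
  then show ?thesis using True by (simp add: has_field_derivative_iff)
next
  case False
  have "sgn y * y = \<bar>y\<bar>" by (simp add: abs_sgn)
  then have "((\<lambda>x. (sgn y * x) powr q) has_real_derivative q * \<bar>y\<bar> powr (q - 1) * sgn y) (at y)"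
    using DERIV_fun_powr[OF DERIV_cmult_Id, of "sgn y" y q] False by simp
  moreover have "open {x. 0 < sgn y * x}" by (intro open_Collect_less continuous_intros)
  moreover have "y \<in> {x. 0 < sgn y * x}" using False \<open>sgn y * y = \<bar>y\<bar>\<close> by simp
  moreover have "(sgn y * x) powr q = \<bar>x\<bar> powr q" if "x \<in> {x. 0 < sgn y * x}" for x
  proof -
    have "sgn y * x = \<bar>x\<bar>" using that by (cases "0 < y") (auto simp: sgn_if)
    then show ?thesis by simp
  qed
  ultimately show ?thesis by (rule has_field_derivative_transform_within_open)
qed

text \<open>With \<open>\<phi> = |w|^(p-2) w\<close> one has \<open>|w|^p = |\<phi>|^(p/(p-1))\<close>, so only the flux \<open>\<phi>\<close>,
  not \<open>w\<close> itself, needs to be differentiable.\<close>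

lemma abs_powr_has_derivative_from_flux:
  fixes w :: "real \<Rightarrow> real"
  assumes p: "p > 1" and flux: "((\<lambda>x. \<bar>w x\<bar> powr (p - 2) * w x) has_real_derivative D) (at t)"
  shows "((\<lambda>x. (p - 1) / p * \<bar>w x\<bar> powr p) has_real_derivative w t * D) (at t)"
proof -
  define q where "q = p / (p - 1)"
  define \<phi> where "\<phi> x = \<bar>w x\<bar> powr (p - 2) * w x" for x
  have abs_\<phi>: "\<bar>\<phi> x\<bar> = \<bar>w x\<bar> powr (p - 1)" for x
  proof (cases "w x = 0")
    case False
    have "\<bar>\<phi> x\<bar> = \<bar>w x\<bar> * \<bar>w x\<bar> powr (p - 2)" by (simp add: \<phi>_def abs_mult)
    also have "\<dots> = \<bar>w x\<bar> powr (1 + (p - 2))" using False by (intro powr_mult_base) simp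
    finally show ?thesis by simp
  qed (simp add: \<phi>_def)
  have "\<bar>\<phi> x\<bar> powr q = \<bar>w x\<bar> powr p" for x
    using p by (simp add: abs_\<phi> powr_powr q_def)
  then have energy: "(\<lambda>x. (p - 1) / p * \<bar>w x\<bar> powr p) = (\<lambda>x. (p - 1) / p * \<bar>\<phi> x\<bar> powr q)"
    by simp
  have "(p - 1) / p * (q * \<bar>\<phi> t\<bar> powr (q - 1) * sgn (\<phi> t)) = w t"
  proof (cases "w t = 0")
    case False
    have "\<bar>\<phi> t\<bar> powr (q - 1) = \<bar>w t\<bar>"
      using p False by (simp add: abs_\<phi> powr_powr q_def field_simps)
    moreover have "sgn (\<phi> t) = sgn (w t)" using False by (simp add: \<phi>_def sgn_mult)
    moreover have "(p - 1) / p * q = 1" using p by (simp add: q_def)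
    ultimately show ?thesis by (simp add: abs_mult_sgn mult.assoc[symmetric])
  qed (simp add: \<phi>_def)
  moreover have "q > 1" using p by (simp add: q_def)
  then have "((\<lambda>x. (p - 1) / p * \<bar>\<phi> x\<bar> powr q) has_real_derivative
      (p - 1) / p * (q * \<bar>\<phi> t\<bar> powr (q - 1) * sgn (\<phi> t)) * D) (at t)"
    using flux unfolding \<phi>_def[symmetric]
    by (intro DERIV_chain2[OF DERIV_cmult[OF has_real_derivative_abs_powr]])
  ultimately show ?thesis unfolding energy by simp
qed

lemma DERIV_nonneg_imp_increasing_off_finite:
  fixes E :: "real \<Rightarrow> real"
  assumes ab: "a \<le> b" and cont: "continuous_on {a..b} E" and fin: "finite S"
    and der: "\<And>x. x \<in> {a<..<b} - S \<Longrightarrow> \<exists>D\<ge>0. (E has_real_derivative D) (at x)"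
  shows "E a \<le> E b"
proof -
  define E' where
    "E' x = (if x \<in> {a<..<b} - S then SOME D. D \<ge> 0 \<and> (E has_real_derivative D) (at x) else 0)"
    for x
  have E': "E' x \<ge> 0 \<and> (E has_real_derivative E' x) (at x)" if "x \<in> {a<..<b} - S" for x
    unfolding E'_def using someI_ex[OF der[OF that]] that by simp
  have "(E' has_integral (E b - E a)) {a..b}"
    by (rule fundamental_theorem_of_calculus_interior_strong[OF fin ab _ cont])
       (use E' in \<open>auto simp: has_real_derivative_iff_has_vector_derivative\<close>)
  moreover have "\<And>x. x \<in> {a..b} \<Longrightarrow> 0 \<le> E' x" using E' by (simp add: E'_def)
  ultimately have "0 \<le> E b - E a" by (rule has_integral_nonneg)
  then show ?thesis by simp
qed

lemma DERIV_pos_imp_strict_increasing_off_finite: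
  fixes E :: "real \<Rightarrow> real"
  assumes ab: "a < b" and cont: "continuous_on {a..b} E" and fin: "finite S"
    and der: "\<And>x. x \<in> {a<..<b} - S \<Longrightarrow> \<exists>D>0. (E has_real_derivative D) (at x)"
  shows "E a < E b"
proof -
  have "infinite ({a<..<b} - S)" using ab fin by (simp add: Diff_infinite_finite)
  then obtain x where x: "x \<in> {a<..<b} - S" by (metis finite.emptyI ex_in_conv)
  obtain D where "D > 0" "(E has_real_derivative D) (at x)" using der[OF x] by blast
  then obtain d where d: "d > 0" "\<And>h. 0 < h \<Longrightarrow> h < d \<Longrightarrow> E x < E (x + h)"
    using DERIV_pos_inc_right by blast
  define y where "y = x + min (d / 2) ((b - x) / 2)"
  have "0 < y - x" "y - x < d" "y < b"
    using x d min.cobounded1[of "d / 2" "(b - x) / 2"] min.cobounded2[of "d / 2" "(b - x) / 2"]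
    by (auto simp: y_def)
  then have y: "x < y" "y < b" "E x < E y" using d(2)[of "y - x"] by auto
  have mono: "E c \<le> E c'" if "a \<le> c" "c \<le> c'" "c' \<le> b" for c c'
  proof (rule DERIV_nonneg_imp_increasing_off_finite[OF that(2) _ fin])
    show "continuous_on {c..c'} E" using that by (auto intro: continuous_on_subset[OF cont])
    fix x assume "x \<in> {c<..<c'} - S"
    then show "\<exists>D\<ge>0. (E has_real_derivative D) (at x)"
      using der[of x] that by (auto dest: less_imp_le)
  qed
  have "E a \<le> E x" "E y \<le> E b" using x y by (auto intro!: mono)
  with y show ?thesis by linarith
qed

lemma finite_zeros_if_deriv_nonzero:
  fixes v :: "real \<Rightarrow> real"
  assumes cont: "continuous_on {c..d} v"
    and der: "\<And>x. x \<in> {c..d} \<Longrightarrow> v x = 0 \<Longrightarrow>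
                \<exists>D\<noteq>0. (v has_real_derivative D) (at x within {c..d})"
  shows "finite {x\<in>{c..d}. v x = 0}"
proof (rule ccontr)
  let ?Z = "{x\<in>{c..d}. v x = 0}"
  assume "infinite ?Z"
  moreover have "compact ?Z"
    using continuous_closed_preimage_constant[OF cont]
    by (auto simp: compact_eq_bounded_closed intro: bounded_subset[of "{c..d}"])
  ultimately obtain x where x: "x \<in> ?Z" "x islimpt ?Z"
    unfolding compact_eq_Bolzano_Weierstrass by blast
  obtain D where D: "D \<noteq> 0" "(v has_real_derivative D) (at x within {c..d})" using der x(1) by blast
  then have "\<forall>\<^sub>F y in at x within {c..d}. (v y - v x) / (y - x) \<noteq> 0"
    by (intro tendsto_imp_eventually_ne) (simp_all add: has_field_derivative_iff)
  then have "\<forall>\<^sub>F y in at x. y \<notin> ?Z"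
    unfolding eventually_at_filter by eventually_elim (use x(1) in auto)
  then show False using x(2) by (simp add: islimpt_iff_eventually)
qed

lemma obtain_first_common_zero:
  fixes v w :: "real \<Rightarrow> real"
  assumes "continuous_on {a..b} v" "continuous_on {a..b} w" "z \<in> {a..b}" "v z = 0" "w z = 0"
  obtains s where "s \<in> {a..z}" "v s = 0" "w s = 0" "\<And>t. t \<in> {a..<s} \<Longrightarrow> v t = 0 \<Longrightarrow> w t \<noteq> 0"
proof -
  define Z where "Z = {t\<in>{a..b}. v t = 0 \<and> w t = 0}"
  have "Z = ({a..b} \<inter> v -` {0}) \<inter> ({a..b} \<inter> w -` {0})" by (auto simp: Z_def)
  then have "closed Z"
    by (simp only:) (intro closed_Int continuous_closed_preimage assms(1,2); simp)
  moreover have "z \<in> Z" "bdd_below Z" using assms(3-5) by (auto simp: Z_def)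
  ultimately have "Inf Z \<in> Z" "Inf Z \<le> z" "\<And>t. t \<in> Z \<Longrightarrow> Inf Z \<le> t"
    by (auto intro: closed_contains_Inf cInf_lower)
  then show ?thesis by (intro that[of "Inf Z"]) (force simp: Z_def)+
qed

lemma tendsto_mult_0_at_right_if_powr_bounded:
  fixes g k :: "real \<Rightarrow> real"
  assumes g: "\<forall>\<^sub>F t in at_right 0. \<bar>g t\<bar> \<le> A * t powr a"
    and k: "\<forall>\<^sub>F t in at_right 0. \<bar>k t\<bar> \<le> B * t powr b" and ab: "a + b > 0"
  shows "((\<lambda>t. g t * k t) \<longlongrightarrow> 0) (at_right 0)"
proof (rule Lim_null_comparison)
  show "\<forall>\<^sub>F t in at_right 0. norm (g t * k t) \<le> A * B * t powr (a + b)"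
    using g k eventually_at_right_less[of 0]
  proof eventually_elim
    case (elim t)
    then have "\<bar>g t\<bar> * \<bar>k t\<bar> \<le> (A * t powr a) * (B * t powr b)"
      by (intro mult_mono) auto
    with elim show ?case by (simp add: abs_mult powr_add algebra_simps)
  qed
  have "((\<lambda>t. A * B * t powr (a + b)) \<longlongrightarrow> A * B * 0 powr (a + b)) (at_right 0)"
    using ab by (intro tendsto_intros) (auto simp: eventually_at_filter)
  then show "((\<lambda>t. A * B * t powr (a + b)) \<longlongrightarrow> 0) (at_right 0)" by simp
qed

lemma eventually_abs_le_linear_at_right:
  fixes v :: "real \<Rightarrow> real"
  assumes "(v has_real_derivative D) (at 0 within {0..z})" "z > 0" "v 0 = 0"
  shows "\<forall>\<^sub>F t in at_right 0. \<bar>v t\<bar> \<le> (\<bar>D\<bar> + 1) * t"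
proof -
  have "((\<lambda>t. v t / t) \<longlongrightarrow> D) (at_right 0)"
    using assms by (simp add: has_field_derivative_iff at_within_Icc_at_right)
  then have "\<forall>\<^sub>F t in at_right 0. \<bar>v t / t\<bar> < \<bar>D\<bar> + 1"
    by (intro order_tendstoD(2)[OF tendsto_rabs]) auto
  then show ?thesis using eventually_at_right_less[of 0]
    by eventually_elim (simp add: abs_divide divide_less_eq less_imp_le)
qed

section \<open>Odd nonlinearities with a weak singularity at 0\<close>

lemma singular_part_bound:
  fixes f g :: "real \<Rightarrow> real"
  assumes eq: "\<exists>\<delta>>0. \<forall>u. 0 < \<bar>u\<bar> \<and> \<bar>u\<bar> < \<delta> \<longrightarrow> f u = - (1 / (\<bar>u\<bar> powr (m - 1) * u)) + g u"
    and g: "isCont g 0" "g 0 = 0" and m: "0 \<le> m"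
  shows "\<exists>\<delta>>0. \<forall>u. 0 < u \<and> u < \<delta> \<longrightarrow> \<bar>f u\<bar> \<le> 2 * u powr (- m)"
proof -
  obtain \<delta> where \<delta>: "\<delta> > 0"
    and f: "\<And>u. 0 < \<bar>u\<bar> \<Longrightarrow> \<bar>u\<bar> < \<delta> \<Longrightarrow> f u = - (1 / (\<bar>u\<bar> powr (m - 1) * u)) + g u"
    using eq by blast
  have "\<forall>\<^sub>F u in at 0. \<bar>g u\<bar> < 1"
    using g by (intro order_tendstoD(2)[OF tendsto_rabs]) (auto simp: isCont_def)
  then obtain \<delta>' where \<delta>': "\<delta>' > 0" "\<And>u. u \<noteq> 0 \<Longrightarrow> dist u 0 < \<delta>' \<Longrightarrow> \<bar>g u\<bar> < 1"
    unfolding eventually_at by blast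
  have "\<bar>f u\<bar> \<le> 2 * u powr (- m)" if u: "0 < u" "u < min \<delta> (min \<delta>' 1)" for u
  proof -
    have "\<bar>u\<bar> powr (m - 1) * u = u powr m"
      using u by (simp add: powr_diff)
    then have "f u = - (u powr (- m)) + g u"
      using f[of u] u by (simp add: powr_minus_divide)
    moreover have "\<bar>g u\<bar> < 1" using \<delta>'(2)[of u] u by simp
    moreover have "1 \<le> u powr (- m)" using powr_mono2'[of "- m" u 1] u m by simp
    ultimately show ?thesis by linarith
  qed
  then show ?thesis using \<delta> \<delta>'(1) by (intro exI[of _ "min \<delta> (min \<delta>' 1)"]) auto
qed

locale odd_weakly_singular =
  fixes f :: "real \<Rightarrow> real" and m \<delta> C :: real
  assumes isCont_f: "\<And>u. u \<noteq> 0 \<Longrightarrow> isCont f u"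
    and odd: "\<And>u. u \<noteq> 0 \<Longrightarrow> f (- u) = - f u"
    and m: "0 < m" "m < 1" and \<delta>: "\<delta> > 0"
    and singular_bound: "\<And>u. 0 < u \<Longrightarrow> u < \<delta> \<Longrightarrow> \<bar>f u\<bar> \<le> C * u powr (- m)"
begin

lemma C_nonneg: "C \<ge> 0"
proof -
  have "0 \<le> C * (\<delta> / 2) powr (- m)" using singular_bound[of "\<delta> / 2"] \<delta> by linarith
  then show ?thesis using \<delta> by (simp add: zero_le_mult_iff)
qed

lemma integrable_near_0:
  assumes x: "0 < x" "x < \<delta>"
  shows "f integrable_on {0..x}" and "\<bar>integral {0..x} f\<bar> \<le> C / (1 - m) * x powr (1 - m)"
proof -
  have "((\<lambda>u. u powr (- m)) has_integral (x powr (1 - m) / (1 - m))) {0..x}"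
    using has_integral_powr_from_0[of "- m" x] m x by (simp add: add.commute)
  then have "((\<lambda>u. C * u powr (- m)) has_integral (C * (x powr (1 - m) / (1 - m)))) {0..x}"
    by (rule has_integral_mult_right)
  then have bound: "((\<lambda>u. C * u powr (- m)) has_integral (C / (1 - m) * x powr (1 - m))) {0<..<x}"
    by (simp add: has_integral_Icc_iff_Ioo)
  have "continuous_on {0<..<x} f" using isCont_f by (intro continuous_at_imp_continuous_on) auto
  then have "f \<in> borel_measurable (lebesgue_on {0<..<x})"
    by (rule continuous_imp_measurable_on_sets_lebesgue) auto
  then have f: "f integrable_on {0<..<x}"
    using has_integral_integrable[OF bound]
    by (rule measurable_bounded_by_integrable_imp_integrable_real) (use singular_bound x in auto)
  then show "f integrable_on {0..x}" by (simp add: integrable_on_open_interval_real)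
  have "norm (integral {0<..<x} f) \<le> integral {0<..<x} (\<lambda>u. C * u powr (- m))"
    by (rule integral_norm_bound_integral[OF f has_integral_integrable[OF bound]])
       (use singular_bound x in auto)
  also have "\<dots> = C / (1 - m) * x powr (1 - m)" using bound by (rule integral_unique)
  finally show "\<bar>integral {0..x} f\<bar> \<le> C / (1 - m) * x powr (1 - m)"
    by (simp add: integral_open_interval_real)
qed

lemma integrable_on_0:
  assumes "0 \<le> x"
  shows "f integrable_on {0..x}"
proof (cases "x < \<delta>")
  case True
  then show ?thesis
    using assms integrable_near_0(1)[of x] integrable_on_refl[of f 0] by (cases "x = 0") auto
next
  case False
  have "f integrable_on {0..\<delta>/2}" using integrable_near_0(1)[of "\<delta>/2"] \<delta> by auto
  moreover have "f integrable_on {\<delta>/2..x}"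
    using isCont_f \<delta> by (intro integrable_continuous_interval continuous_at_imp_continuous_on) auto
  ultimately show ?thesis
    by (rule Henstock_Kurzweil_Integration.integrable_combine[rotated 2]) (use False \<delta> in auto)
qed

text \<open>\<open>integral {0..u} f\<close> vanishes for \<open>u < 0\<close>; for odd \<open>f\<close> integrating over \<open>[0, |u|]\<close>
  gives the primitive on both sides of 0.\<close>

definition primitive :: "real \<Rightarrow> real" where
  "primitive u = integral {0..\<bar>u\<bar>} f"

lemma primitive_0 [simp]: "primitive 0 = 0"
  by (simp add: primitive_def)

lemma abs_primitive_le: "\<bar>u\<bar> < \<delta> \<Longrightarrow> \<bar>primitive u\<bar> \<le> C / (1 - m) * \<bar>u\<bar> powr (1 - m)"
  using integrable_near_0(2)[of "\<bar>u\<bar>"] m by (cases "u = 0") (auto simp: primitive_def)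

lemma primitive_has_real_derivative:
  assumes u: "u \<noteq> 0"
  shows "(primitive has_real_derivative f u) (at u)"
proof -
  define G where "G x = integral {0..x} f" for x
  have G: "(G has_real_derivative f x) (at x)" if x: "x > 0" for x
  proof -
    have "(G has_vector_derivative f x) (at x within {0..2 * x})"
      unfolding G_def using integral_has_vector_derivative_continuous_at[of f 0 "2 * x" x "{}"]
      using x integrable_on_0[of "2 * x"] isCont_f[of x]
      by (auto intro: continuous_at_imp_continuous_at_within)
    moreover have "at x within {0..2 * x} = at x" using x by (intro at_within_interior) auto
    ultimately show ?thesis by (simp add: has_real_derivative_iff_has_vector_derivative)
  qed
  show ?thesis
  proof (cases "u > 0")
    case True
    then show ?thesis
      by (intro has_field_derivative_transform_within_open[OF G[OF True], of "{0<..}"])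
         (auto simp: primitive_def G_def)
  next
    case False
    with u have u': "u < 0" by simp
    have "((\<lambda>x. G (- x)) has_real_derivative f (- u) * (- 1)) (at u)"
      using u' by (intro DERIV_chain2[OF G] derivative_eq_intros) auto
    then have "((\<lambda>x. G (- x)) has_real_derivative f u) (at u)" using odd[OF u] by simp
    then show ?thesis
      by (rule has_field_derivative_transform_within_open[of _ _ _ "{..<0}"])
         (use u' in \<open>auto simp: primitive_def G_def\<close>)
  qed
qed

lemma isCont_primitive: "isCont primitive u"
proof (cases "u = 0")
  case False
  then show ?thesis using primitive_has_real_derivative DERIV_isCont by blast
next
  case True
  have "\<forall>\<^sub>F x in at 0. \<bar>x\<bar> < \<delta>"
    using \<delta> by (intro order_tendstoD(2)) (auto intro!: tendsto_eq_intros)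
  then have "\<forall>\<^sub>F x in at 0. norm (primitive x) \<le> C / (1 - m) * \<bar>x\<bar> powr (1 - m)"
    by eventually_elim (use abs_primitive_le in auto)
  moreover have "((\<lambda>x. C / (1 - m) * \<bar>x\<bar> powr (1 - m)) \<longlongrightarrow> 0) (at 0)"
  proof -
    have "((\<lambda>x. C / (1 - m) * \<bar>x\<bar> powr (1 - m)) \<longlongrightarrow> C / (1 - m) * \<bar>0\<bar> powr (1 - m)) (at 0)"
      using m by (intro tendsto_intros) auto
    then show ?thesis by simp
  qed
  ultimately have "(primitive \<longlongrightarrow> 0) (at 0)" by (rule Lim_null_comparison)
  then show ?thesis using True by (simp add: isCont_def)
qed

lemma primitive_neg:
  assumes neg: "\<And>u. 0 < u \<Longrightarrow> u < \<beta> \<Longrightarrow> f u < 0" and u: "u \<noteq> 0" "\<bar>u\<bar> \<le> \<beta>"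
  shows "primitive u < 0"
proof -
  have "primitive \<bar>u\<bar> < primitive 0"
  proof (rule DERIV_neg_imp_decreasing_open[of 0 "\<bar>u\<bar>" primitive])
    fix x assume "0 < x" "x < \<bar>u\<bar>"
    then show "\<exists>y. (primitive has_real_derivative y) (at x) \<and> y < 0"
      using primitive_has_real_derivative[of x] neg[of x] u by auto
  qed (use u isCont_primitive in \<open>auto intro: continuous_at_imp_continuous_on\<close>)
  then show ?thesis by (simp add: primitive_def)
qed

lemma eventually_abs_primitive_comp_le:
  assumes w: "\<forall>\<^sub>F t in at_right 0. \<bar>w t\<bar> \<le> M * t"
  shows "\<forall>\<^sub>F t in at_right 0. \<bar>primitive (w t)\<bar> \<le> C / (1 - m) * M powr (1 - m) * t powr (1 - m)"
proof -
  have "\<forall>\<^sub>F t in at_right 0. \<bar>M\<bar> * t < \<delta>"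
    using \<delta> by (intro order_tendstoD(2)) (auto intro!: tendsto_eq_intros)
  with w eventually_at_right_less[of 0] show ?thesis
  proof eventually_elim
    case (elim t)
    then have "0 \<le> M * t" using abs_ge_zero[of "w t"] by linarith
    then have "0 \<le> M" using elim by (simp add: zero_le_mult_iff)
    then have "\<bar>w t\<bar> < \<delta>" using elim by auto
    then have "\<bar>primitive (w t)\<bar> \<le> C / (1 - m) * \<bar>w t\<bar> powr (1 - m)" by (rule abs_primitive_le)
    also have "\<dots> \<le> C / (1 - m) * (M * t) powr (1 - m)"
      using elim C_nonneg m by (intro mult_left_mono powr_mono2) auto
    finally show ?case using \<open>0 \<le> M\<close> elim by (simp add: powr_mult mult.assoc)
  qed
qed

end

section \<open>The weight \<open>h\<close>\<close>

lemma powr_gt_if_less_Tconst: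
  assumes p: "1 < p" "p < real N" and R: "R > 0" and t: "0 < t" "t < Tconst N p R"
  shows "R < t powr ((p - 1) / (p - real N))"
proof -
  have "(p - real N) / (p - 1) * ((p - 1) / (p - real N)) = 1" using p by simp
  then have "Tconst N p R powr ((p - 1) / (p - real N)) = R"
    using R by (simp add: Tconst_def powr_powr)
  moreover have "(p - 1) / (p - real N) < 0" using p by (simp add: divide_pos_neg)
  ultimately show ?thesis using powr_less_mono2_neg t by metis
qed

lemma hfun_pos:
  assumes p: "1 < p" "p < real N" and R: "R > 0" and K_pos: "\<forall>r\<ge>R. K r > 0"
    and t: "0 < t" "t < Tconst N p R"
  shows "hfun N p K t > 0"
  using powr_gt_if_less_Tconst[OF p R t] K_pos p t by (simp add: hfun_def)

lemma hfun_has_negative_derivative: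
  assumes p: "1 < p" "p < real N" and R: "R > 0"
    and K_pos: "\<forall>r\<ge>R. K r > 0"
    and K_deriv: "\<forall>r\<ge>R. (K has_real_derivative K' r) (at r within {R..})"
    and K_ratio: "\<forall>r\<ge>R. r * K' r / K r > - ((real N - 1) * p / (p - 1))"
    and t: "0 < t" "t < Tconst N p R"
  shows "\<exists>D<0. (hfun N p K has_real_derivative D) (at t)"
proof -
  define c where "c = ((real N - p) / (p - 1)) powr (- p)"
  define e1 where "e1 = p * (real N - 1) / (p - real N)"
  define e2 where "e2 = (p - 1) / (p - real N)"
  define r where "r = t powr e2"
  have r: "r > R" using powr_gt_if_less_Tconst[OF p R t] by (simp add: r_def e2_def)
  have "at r within {R..} = at r" using r by (intro at_within_interior) simp
  moreover have "(K has_real_derivative K' r) (at r within {R..})" using K_deriv r by simp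
  ultimately have "(K has_real_derivative K' r) (at r)" by simp
  then have "((\<lambda>s. c * s powr e1 * K (s powr e2)) has_real_derivative
      c * (e1 * t powr (e1 - 1)) * K r + K' r * (e2 * t powr (e2 - 1)) * (c * t powr e1)) (at t)"
    using t unfolding r_def
    by (intro DERIV_mult DERIV_cmult DERIV_chain2[of K] has_real_derivative_powr) auto
  moreover have "hfun N p K = (\<lambda>s. c * s powr e1 * K (s powr e2))"
    by (simp add: fun_eq_iff hfun_def c_def e1_def e2_def)
  moreover have "c * (e1 * t powr (e1 - 1)) * K r + K' r * (e2 * t powr (e2 - 1)) * (c * t powr e1)
      = c * t powr (e1 - 1) * (e1 * K r + e2 * (r * K' r))"
    using t by (simp add: r_def powr_diff algebra_simps)
  moreover have "e1 * K r + e2 * (r * K' r) < 0"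
  proof -
    have Kr: "K r > 0" using K_pos r by simp
    have "e2 < 0" using p by (simp add: e2_def divide_pos_neg)
    moreover have "r * K' r / K r > - ((real N - 1) * p / (p - 1))" using K_ratio r by simp
    then have "r * K' r > - ((real N - 1) * p / (p - 1)) * K r" using Kr by (simp add: field_simps)
    ultimately have "e2 * (r * K' r) < e2 * (- ((real N - 1) * p / (p - 1)) * K r)"
      by (intro mult_strict_left_mono_neg)
    also have "\<dots> = - e1 * K r"
    proof -
      have "e2 * ((real N - 1) * p / (p - 1)) = e1" using p by (simp add: e1_def e2_def)
      then show ?thesis by (metis mult.assoc mult_minus_left mult_minus_right)
    qed
    finally show ?thesis by simp
  qed
  moreover have "c * t powr (e1 - 1) > 0" using p t by (simp add: c_def)
  ultimately show ?thesis by (metis mult_pos_neg)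
qed

lemma hfun_bigo_powr:
  assumes p: "1 < p" "p < real N" and R: "R > 0" and K_pos: "\<forall>r\<ge>R. K r > 0"
    and K_le: "\<forall>r\<ge>R. K r \<le> K1 / r powr \<alpha>1"
    and \<alpha>1: "real N + m * (real N - p) / (p - 1) < \<alpha>1"
  shows "\<exists>e>m - 1. \<exists>A. \<forall>\<^sub>F t in at_right 0. \<bar>hfun N p K t\<bar> \<le> A * t powr e"
proof (intro exI conjI)
  define c where "c = ((real N - p) / (p - 1)) powr (- p)"
  define e1 where "e1 = p * (real N - 1) / (p - real N)"
  define e2 where "e2 = (p - 1) / (p - real N)"
  have "real N * (p - 1) + m * (real N - p) < \<alpha>1 * (p - 1)"
    using \<alpha>1 p by (simp add: field_simps)
  then have "p * (real N - 1) - \<alpha>1 * (p - 1) < (m - 1) * (p - real N)"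
    by (simp add: algebra_simps)
  then have "m - 1 < (p * (real N - 1) - \<alpha>1 * (p - 1)) / (p - real N)"
    using p by (simp add: neg_less_divide_eq)
  moreover have "e2 * \<alpha>1 = \<alpha>1 * (p - 1) / (p - real N)" by (simp add: e2_def)
  then have "e1 - e2 * \<alpha>1 = (p * (real N - 1) - \<alpha>1 * (p - 1)) / (p - real N)"
    by (simp add: e1_def diff_divide_distrib)
  ultimately show "e1 - e2 * \<alpha>1 > m - 1" by simp
  have "Tconst N p R > 0" using R by (simp add: Tconst_def)
  show "\<forall>\<^sub>F t in at_right 0. \<bar>hfun N p K t\<bar> \<le> c * K1 * t powr (e1 - e2 * \<alpha>1)"
    using eventually_at_right_real[OF \<open>Tconst N p R > 0\<close>]
  proof eventually_elim
    case (elim t)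
    then have t: "0 < t" "t < Tconst N p R" by auto
    have "R < t powr e2" using powr_gt_if_less_Tconst[OF p R t] by (simp add: e2_def)
    then have "K (t powr e2) \<le> K1 / (t powr e2) powr \<alpha>1" using K_le by simp
    also have "\<dots> = K1 * t powr (- (e2 * \<alpha>1))"
      using t by (simp add: powr_powr powr_minus divide_inverse)
    finally have "K (t powr e2) \<le> K1 * t powr (- (e2 * \<alpha>1))" .
    then have "c * t powr e1 * K (t powr e2) \<le> c * t powr e1 * (K1 * t powr (- (e2 * \<alpha>1)))"
      using p by (intro mult_left_mono) (auto simp: c_def)
    also have "\<dots> = c * K1 * t powr (e1 - e2 * \<alpha>1)"
      using t by (simp add: powr_add[symmetric] algebra_simps)
    finally show ?case
      using hfun_pos[OF p R K_pos t] by (simp add: hfun_def c_def e1_def e2_def)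
  qed
qed

lemma (in odd_weakly_singular) hfun_mult_primitive_tendsto_0:
  assumes p: "1 < p" "p < real N" and R: "R > 0" and K_pos: "\<forall>r\<ge>R. K r > 0"
    and K_le: "\<forall>r\<ge>R. K r \<le> K1 / r powr \<alpha>1"
    and \<alpha>1: "real N + m * (real N - p) / (p - 1) < \<alpha>1"
    and v: "(v has_real_derivative D) (at 0 within {0..z})" "z > 0" "v 0 = 0"
  shows "((\<lambda>t. hfun N p K t * primitive (v t)) \<longlongrightarrow> 0) (at_right 0)"
proof -
  obtain e A where e: "e > m - 1" and h: "\<forall>\<^sub>F t in at_right 0. \<bar>hfun N p K t\<bar> \<le> A * t powr e"
    using hfun_bigo_powr[OF p R K_pos K_le \<alpha>1] by blast
  have F: "\<forall>\<^sub>F t in at_right 0.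
      \<bar>primitive (v t)\<bar> \<le> C / (1 - m) * (\<bar>D\<bar> + 1) powr (1 - m) * t powr (1 - m)"
    using eventually_abs_le_linear_at_right[OF v] by (rule eventually_abs_primitive_comp_le)
  show ?thesis using e by (intro tendsto_mult_0_at_right_if_powr_bounded[OF h F]) simp
qed

section \<open>The energy argument\<close>

lemma ivp_solution_deriv_0_nonzero:
  assumes "ivp_solution N p K f a z v v'" "a > 0" "z \<ge> 0"
  shows "v' 0 \<noteq> 0"
proof
  assume "v' 0 = 0"
  moreover have "\<bar>v' 0\<bar> powr (p - 2) * v' 0
      = a powr (p - 1) - (LINT s:{0<..<0}|lborel. hfun N p K s * f (v s))"
    using assms(1,3) by (simp add: ivp_solution_def)
  ultimately show False using assms(2) by (simp add: set_lebesgue_integral_def)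
qed

lemma ivp_solution_flux_has_derivative:
  assumes sol: "ivp_solution N p K f a z v v'" and t: "0 < t" "t < z"
    and h: "isCont (hfun N p K) t" and f: "isCont f (v t)"
  shows "((\<lambda>x. \<bar>v' x\<bar> powr (p - 2) * v' x) has_real_derivative - (hfun N p K t * f (v t))) (at t)"
proof -
  define g where "g = (\<lambda>s. hfun N p K s * f (v s))"
  have "(v has_real_derivative v' t) (at t within {0..z})"
    using sol t by (simp add: ivp_solution_def)
  then have v: "(v has_real_derivative v' t) (at t)" using t at_within_Icc_at[of 0 t z] by simp
  have flux: "\<bar>v' x\<bar> powr (p - 2) * v' x = a powr (p - 1) - integral {0..x} g" if "x \<in> {0..z}" for x
  proof -
    have "set_integrable lborel {0<..<x} g \<and>
        \<bar>v' x\<bar> powr (p - 2) * v' x = a powr (p - 1) - (LINT s:{0<..<x}|lborel. g s)"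
      using sol that unfolding ivp_solution_def g_def by blast
    then show ?thesis by (simp add: set_borel_integral_eq_integral(2) integral_open_interval_real)
  qed
  have "g integrable_on {0..z}"
  proof -
    have "set_integrable lborel {0<..<z} g" using sol t unfolding ivp_solution_def g_def by auto
    then have "g integrable_on {0<..<z}" by (rule set_borel_integral_eq_integral(1))
    then show ?thesis by (simp add: integrable_on_open_interval_real)
  qed
  moreover have "isCont g t"
    unfolding g_def using isCont_o2[OF DERIV_isCont[OF v] f] by (intro isCont_mult h)
  ultimately have "((\<lambda>x. integral {0..x} g) has_vector_derivative g t) (at t within {0..z} - {})"
    using t by (intro integral_has_vector_derivative_continuous_at)
               (auto intro: continuous_at_imp_continuous_at_within)
  then have "((\<lambda>x. integral {0..x} g) has_real_derivative g t) (at t)"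
    using t at_within_Icc_at[of 0 t z] by (simp add: has_real_derivative_iff_has_vector_derivative)
  then have "((\<lambda>x. a powr (p - 1) - integral {0..x} g) has_real_derivative - g t) (at t)"
    by (auto intro!: derivative_eq_intros)
  then have "((\<lambda>x. a powr (p - 1) - integral {0..x} g) has_real_derivative
      - (hfun N p K t * f (v t))) (at t)"
    by (simp add: g_def)
  then show ?thesis
    by (rule has_field_derivative_transform_within_open[where S="{0<..<z}"])
       (use t flux in auto)
qed

locale energy_setting =
  fixes p z \<beta> :: real and h f F v v' :: "real \<Rightarrow> real"
  assumes p: "p > 1" and z: "z > 0" and \<beta>: "\<beta> > 0"
    and v_deriv: "\<And>t. t \<in> {0..z} \<Longrightarrow> (v has_real_derivative v' t) (at t within {0..z})"
    and v'_cont: "continuous_on {0..z} v'"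
    and v_0: "v 0 = 0" and v'_0: "v' 0 \<noteq> 0"
    and flux_deriv: "\<And>t. t \<in> {0<..<z} \<Longrightarrow> v t \<noteq> 0 \<Longrightarrow>
      ((\<lambda>x. \<bar>v' x\<bar> powr (p - 2) * v' x) has_real_derivative - (h t * f (v t))) (at t)"
    and h_pos: "\<And>t. t \<in> {0<..<z} \<Longrightarrow> h t > 0"
    and h_decreasing: "\<And>t. t \<in> {0<..z} \<Longrightarrow> \<exists>D<0. (h has_real_derivative D) (at t)"
    and isCont_F: "\<And>u. isCont F u"
    and F_deriv: "\<And>u. u \<noteq> 0 \<Longrightarrow> (F has_real_derivative f u) (at u)"
    and F_0: "F 0 = 0"
    and F_neg: "\<And>u. u \<noteq> 0 \<Longrightarrow> \<bar>u\<bar> \<le> \<beta> \<Longrightarrow> F u < 0"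
    and hF_0: "((\<lambda>t. h t * F (v t)) \<longlongrightarrow> 0) (at_right 0)"
begin

definition energy :: "real \<Rightarrow> real" where
  "energy t = (p - 1) / p * \<bar>v' t\<bar> powr p + h t * F (v t)"

lemma continuous_on_v: "continuous_on {0..z} v"
  using v_deriv by (rule DERIV_continuous_on)

lemma continuous_on_F_v: "d \<le> z \<Longrightarrow> continuous_on {0..d} (\<lambda>t. F (v t))"
  using isCont_F continuous_on_subset[OF continuous_on_v]
  by (intro continuous_on_compose2[OF continuous_at_imp_continuous_on[of UNIV F]]) auto

lemma continuous_on_energy:
  assumes d: "0 < d" "d \<le> z"
  shows "continuous_on {0..d} energy"
proof -
  have "continuous (at t within {0..d}) (\<lambda>t. h t * F (v t))" if t: "t \<in> {0..d}" for t
  proof (cases "t = 0")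
    case True
    then show ?thesis
      using hF_0 d by (simp add: continuous_within at_within_Icc_at_right v_0 F_0)
  next
    case False
    then have "isCont h t" using h_decreasing[of t] t d DERIV_isCont by force
    then have "continuous (at t within {0..d}) h" by (rule continuous_at_imp_continuous_at_within)
    moreover have "continuous (at t within {0..d}) (\<lambda>t. F (v t))"
      using continuous_on_F_v[OF d(2)] t by (simp add: continuous_on_eq_continuous_within)
    ultimately show ?thesis by (rule continuous_mult)
  qed
  then have "continuous_on {0..d} (\<lambda>t. h t * F (v t))"
    by (simp add: continuous_on_eq_continuous_within)
  moreover have "continuous_on {0..d} (\<lambda>t. \<bar>v' t\<bar> powr p)"
    using p continuous_on_subset[OF v'_cont] d
    by (intro continuous_on_powr' continuous_intros) auto
  ultimately show ?thesis unfolding energy_def by (intro continuous_on_add continuous_on_mult_left)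
qed

lemma energy_has_derivative:
  assumes t: "t \<in> {0<..<z}" and vt: "v t \<noteq> 0"
  shows "\<exists>D<0. (energy has_real_derivative D * F (v t)) (at t)"
proof -
  obtain D where D: "D < 0" "(h has_real_derivative D) (at t)" using h_decreasing t by force
  have "(v has_real_derivative v' t) (at t)"
    using v_deriv[of t] t at_within_Icc_at[of 0 t z] by simp
  then have "((\<lambda>x. F (v x)) has_real_derivative f (v t) * v' t) (at t)"
    using DERIV_chain2[of F "f (v t)" v t] F_deriv[OF vt] by blast
  then have "(energy has_real_derivative
      v' t * - (h t * f (v t)) + (D * F (v t) + f (v t) * v' t * h t)) (at t)"
    unfolding energy_def
    by (intro DERIV_add DERIV_mult D abs_powr_has_derivative_from_flux[OF p flux_deriv[OF t vt]])
  then show ?thesis using D by (intro exI[of _ D]) (simp add: algebra_simps)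
qed

lemma energy_strict_mono:
  assumes cd: "0 \<le> c" "c < d" "d \<le> z"
    and simple: "\<And>t. t \<in> {c..d} \<Longrightarrow> v t = 0 \<Longrightarrow> v' t \<noteq> 0"
    and neg: "\<And>t. t \<in> {c<..<d} \<Longrightarrow> v t \<noteq> 0 \<Longrightarrow> F (v t) < 0"
  shows "energy c < energy d"
proof (rule DERIV_pos_imp_strict_increasing_off_finite
    [where E = energy and a = c and b = d and S = "{t\<in>{c..d}. v t = 0}"])
  show "continuous_on {c..d} energy"
    using cd by (intro continuous_on_subset[OF continuous_on_energy[of d]]) auto
  have sub: "{c..d} \<subseteq> {0..z}" using cd by auto
  show "finite {t\<in>{c..d}. v t = 0}"
  proof (rule finite_zeros_if_deriv_nonzero)
    show "continuous_on {c..d} v" using continuous_on_subset[OF continuous_on_v sub] .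
    fix t assume "t \<in> {c..d}" "v t = 0"
    then show "\<exists>D\<noteq>0. (v has_real_derivative D) (at t within {c..d})"
      using simple has_field_derivative_subset[OF v_deriv sub] sub by blast
  qed
  fix t assume t: "t \<in> {c<..<d} - {t\<in>{c..d}. v t = 0}"
  then have "t \<in> {0<..<z}" "v t \<noteq> 0" using cd by auto
  then show "\<exists>D>0. (energy has_real_derivative D) (at t)"
    using energy_has_derivative neg[of t] t mult_neg_neg by blast
qed (use cd in auto)

lemma obtain_last_nonneg_energy:
  assumes s: "0 < s" "s \<le> z" "v s = 0"
  obtains t0 where "t0 \<in> {0..<s}" "energy t0 \<ge> 0"
    "\<And>t. t \<in> {t0<..s} \<Longrightarrow> v t \<noteq> 0 \<Longrightarrow> F (v t) < 0"
proof -
  define B where "B = insert 0 {t\<in>{0..s}. \<beta> \<le> \<bar>v t\<bar> \<and> 0 \<le> F (v t)}"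
  have "B = insert 0 (({0..s} \<inter> (\<lambda>t. \<bar>v t\<bar>) -` {\<beta>..}) \<inter> ({0..s} \<inter> (\<lambda>t. F (v t)) -` {0..}))"
    by (auto simp: B_def)
  moreover have "continuous_on {0..s} (\<lambda>t. \<bar>v t\<bar>)"
    using continuous_on_subset[OF continuous_on_v] s by (intro continuous_intros) auto
  ultimately have "closed B" using continuous_on_F_v[OF s(2)]
    by (simp only:) (intro closed_insert closed_Int continuous_closed_preimage; simp)
  moreover have bdd: "bdd_above B" by (auto simp: B_def intro: bdd_aboveI[of _ s])
  moreover have "B \<noteq> {}" by (simp add: B_def)
  ultimately have t0: "Sup B \<in> B" by (intro closed_contains_Sup)
  have after_t0: "\<And>t. t \<in> B \<Longrightarrow> t \<le> Sup B" by (rule cSup_upper[OF _ bdd])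
  show ?thesis
  proof (rule that[of "Sup B"])
    show t0_s: "Sup B \<in> {0..<s}" using t0 s \<beta> by (auto simp: B_def less_le)
    show "energy (Sup B) \<ge> 0"
    proof (cases "Sup B = 0")
      case True
      then show ?thesis using p by (simp add: energy_def v_0 F_0)
    next
      case False
      then have "h (Sup B) > 0" "F (v (Sup B)) \<ge> 0"
        using t0 t0_s s h_pos[of "Sup B"] by (auto simp: B_def)
      then show ?thesis using p by (simp add: energy_def)
    qed
    fix t assume "t \<in> {Sup B<..s}" "v t \<noteq> 0"
    then show "F (v t) < 0"
      using after_t0[of t] F_neg[of "v t"] t0_s by (force simp: B_def)
  qed
qed

theorem deriv_nonzero_at_zero:
  assumes "v z = 0"
  shows "v' z \<noteq> 0"
proof
  assume "v' z = 0"
  obtain s where s: "s \<in> {0..z}" "v s = 0" "v' s = 0"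
    and simple: "\<And>t. t \<in> {0..<s} \<Longrightarrow> v t = 0 \<Longrightarrow> v' t \<noteq> 0"
    by (rule obtain_first_common_zero[OF continuous_on_v v'_cont, of z])
       (use z assms \<open>v' z = 0\<close> in auto)
  have "s > 0" using s v'_0 by (cases "s = 0") auto
  with s obtain t0 where t0: "t0 \<in> {0..<s}" "energy t0 \<ge> 0"
    and after: "\<And>t. t \<in> {t0<..s} \<Longrightarrow> v t \<noteq> 0 \<Longrightarrow> F (v t) < 0"
    using obtain_last_nonneg_energy by auto
  have increasing: "energy c < energy d" if "t0 \<le> c" "c < d" "d < s" for c d
    using that t0 s simple after by (intro energy_strict_mono) auto
  define d where "d = (t0 + s) / 2"
  have d: "t0 < d" "d < s" using t0 by (auto simp: d_def)
  have "energy d \<le> energy s"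
  proof (rule tendsto_lowerbound)
    show "(energy \<longlongrightarrow> energy s) (at_left s)"
      using continuous_on_energy[of s] s \<open>s > 0\<close>
      by (auto simp: continuous_on_Icc_at_leftD)
    show "\<forall>\<^sub>F x in at_left s. energy d \<le> energy x"
      using eventually_at_left_real[OF d(2)]
    proof eventually_elim
      case (elim x)
      then have "energy d < energy x" using d by (intro increasing) auto
      then show ?case by simp
    qed
  qed simp
  moreover have "energy s = 0" using s by (simp add: energy_def F_0)
  ultimately show False using increasing[of t0 d] t0 d by simp
qed

end

theorem lemma2p2:
  fixes N :: nat and p a R l m z :: real
    and f g1 g2 K K' v v' :: "real \<Rightarrow> real"
  assumes N: "N > 2" and p: "1 < p" "p < real N" and a: "a > 0"
    (* standing: f odd and locally Lipschitz on R \ {0} *)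
    and f_odd: "\<forall>u. u \<noteq> 0 \<longrightarrow> f (- u) = - f u"
    and f_lip: "loc_lipschitz_on (- {0}) f"
    (* (H1) *)
    and H1_g1: "loc_lipschitz_on UNIV g1" and H1_l: "l > p - 1"
    and H1_eq: "\<exists>U. \<forall>u. \<bar>u\<bar> \<ge> U \<longrightarrow> f u = \<bar>u\<bar> powr (l - 1) * u + g1 u"
    and H1_lim: "((\<lambda>u. \<bar>g1 u\<bar> / \<bar>u\<bar> powr l) \<longlongrightarrow> 0) at_top"
    (* (H2) *)
    and H2_g2: "loc_lipschitz_on UNIV g2" "g2 0 = 0" and H2_m: "0 < m" "m < 1"
    and H2_eq: "\<exists>\<delta>>0. \<forall>u. 0 < \<bar>u\<bar> \<and> \<bar>u\<bar> < \<delta> \<longrightarrow>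
                   f u = - (1 / (\<bar>u\<bar> powr (m - 1) * u)) + g2 u"
    (* (H3) *)
    and H3: "\<exists>\<beta>>0. f \<beta> = 0 \<and> (\<forall>u>0. f u = 0 \<longrightarrow> u = \<beta>)
                 \<and> (\<forall>u. 0 < u \<and> u < \<beta> \<longrightarrow> f u < 0) \<and> (\<forall>u>\<beta>. f u > 0)"
    (* (H4) *)
    and R: "R > 0"
    and K_pos: "\<forall>r\<ge>R. K r > 0"
    and K_deriv: "\<forall>r\<ge>R. (K has_real_derivative K' r) (at r within {R..})"
    and K_cont: "continuous_on {R..} K" and K'_cont: "continuous_on {R..} K'"
    and K_ratio: "\<forall>r\<ge>R. r * K' r / K r > - ((real N - 1) * p / (p - 1))"
    and K_bounds: "\<exists>K0 K1 \<alpha> \<alpha>1. K0 > 0 \<and> K1 > 0 \<and>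
                    real N + m * (real N - p) / (p - 1) < \<alpha>1 \<and> \<alpha>1 \<le> \<alpha> \<and> \<alpha> < 2 * (real N - 1) \<and>
                    (\<forall>r\<ge>R. K0 / r powr \<alpha> \<le> K r \<and> K r \<le> K1 / r powr \<alpha>1)"
    (* the solution *)
    and z: "0 < z" "z < Tconst N p R"
    and sol: "ivp_solution N p K f a z v v'"
    and vz: "v z = 0"
  shows "v' z \<noteq> 0"
proof -
  have isCont_f: "\<And>u. u \<noteq> 0 \<Longrightarrow> isCont f u"
    using f_lip by (rule isCont_if_loc_lipschitz_on) auto
  obtain \<delta> where \<delta>: "\<delta> > 0" "\<forall>u. 0 < u \<and> u < \<delta> \<longrightarrow> \<bar>f u\<bar> \<le> 2 * u powr (- m)"
    using singular_part_bound[OF H2_eq isCont_if_loc_lipschitz_on[OF H2_g2(1)] H2_g2(2)] H2_m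
    by auto
  interpret f: odd_weakly_singular f m \<delta> 2
    using isCont_f f_odd H2_m \<delta> by unfold_locales auto
  obtain \<beta> where \<beta>: "\<beta> > 0" "\<And>u. 0 < u \<Longrightarrow> u < \<beta> \<Longrightarrow> f u < 0"
    using H3 by blast
  obtain K1 \<alpha>1 where K1: "\<forall>r\<ge>R. K r \<le> K1 / r powr \<alpha>1" "real N + m * (real N - p) / (p - 1) < \<alpha>1"
    using K_bounds by blast
  have hF: "((\<lambda>t. hfun N p K t * f.primitive (v t)) \<longlongrightarrow> 0) (at_right 0)"
    using sol z
    by (intro f.hfun_mult_primitive_tendsto_0[OF p R K_pos K1]) (auto simp: ivp_solution_def)
  have h: "hfun N p K t > 0" "\<exists>D<0. (hfun N p K has_real_derivative D) (at t)"
    if "t \<in> {0<..z}" for t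
    using that z hfun_pos[OF p R K_pos] hfun_has_negative_derivative[OF p R K_pos K_deriv K_ratio]
    by auto
  interpret energy_setting p z \<beta> "hfun N p K" f f.primitive v v'
  proof unfold_locales
    show "v' 0 \<noteq> 0" using sol a z by (intro ivp_solution_deriv_0_nonzero) auto
    fix t assume "t \<in> {0<..<z}" "v t \<noteq> 0"
    then show "((\<lambda>x. \<bar>v' x\<bar> powr (p - 2) * v' x) has_real_derivative
        - (hfun N p K t * f (v t))) (at t)"
      using h(2)[of t] DERIV_isCont isCont_f
      by (intro ivp_solution_flux_has_derivative[OF sol]) auto
  qed (use p z \<beta> sol h hF f.isCont_primitive f.primitive_has_real_derivative
         f.primitive_neg[OF \<beta>(2)] in \<open>auto simp: ivp_solution_def\<close>)
  show ?thesis using vz by (rule deriv_nonzero_at_zero)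
qed

end
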